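(* For every positive integer $n$ there exists a bijection $\phi:\mathcal{H}_n\to\mathcal{H}_n$ such that $\mathrm{rep}(\lambda)=\mathrm{even}(\phi(\lambda))$ for every $\lambda\in\mathcal{H}_n$.
   Context: A partition is a finite nonempty weakly decreasing sequence $\lambda=(\lambda_1,\ldots,\lambda_k)$ of positive integers; $\ell(\lambda)=k$. The perimeter is $\Gamma(\lambda)=\lambda_1+\ell(\lambda)-1$; $\mathcal{H}_n$ is the set of partitions with perimeter $n$. $\mathrm{rep}(\lambda)=|\{1\le i\le \ell(\lambda)-1:\lambda_i=\lambda_{i+1}\}|$ and $\mathrm{even}(\lambda)=|\{1\le i\le\ell(\lambda):\lambda_i\text{ even}\}|$. *)

theory Defs
  imports Main
begin

definition is_partition :: "nat list \<Rightarrow> bool" where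
  "is_partition p \<longleftrightarrow> p \<noteq> [] \<and> sorted_wrt (\<ge>) p \<and> (\<forall>x\<in>set  p. 0 < x)"

definition perimeter :: "nat list \<Rightarrow> nat" where
  "perimeter p = hd p + length p - 1"

definition H :: "nat \<Rightarrow> nat list set" where
  "H n = { p. is_partition p \<and> perimeter p = n}"

definition rep :: "nat list \<Rightarrow> nat" where
  "rep p = card {i. i + 1 < length p \<and> p ! i = p ! (i + 1)}"

definition even_parts :: "nat list \<Rightarrow> nat" where
  "even_parts p = card {i. i < length p \<and> even (p ! i)}"

end

theory Submission
  imports Defs
begin

text \<open>For n > 0, every partition of perimeter n + 1 arises from one of perimeter n either by
  repeating its largest part or by increasing it by one. Repeating raises rep by one; increasing
  lowers rep by one exactly when the largest part was repeated, and leaves it unchanged otherwise.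
  The bijection is built along this recursion: it applies the same operation to the image of the
  predecessor when the predecessor's largest part is repeated, and the other operation otherwise.
  By induction the image then has an even largest part exactly when the argument has a repeated
  one, and with this invariant the number of even parts changes at each step exactly as rep does.
  The same recursion shows that the map is onto, and a surjective self-map of the finite set of
  partitions of perimeter n is bijective.\<close>

lemma card_Collect_less_Suc:
  "card {i. i < Suc m \<and> P i} = (if P 0 then 1 else 0) + card {i. i < m \<and> P (Suc i)}"
  using card_less_Suc[of "Collect P" m] card_less_Suc2[of "Collect P" m]
  by (auto simp: conj_commute)

lemma even_parts_Nil [simp]: "even_parts [] = 0"
  by (simp add: even_parts_def)

lemma even_parts_Cons [simp]: "even_parts (x # r) = (if even x then 1 else 0) + even_parts r"
  using card_Collect_less_Suc[of "length r" "\<lambda>i. even ((x # r) ! i)"]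
  by (simp add: even_parts_def)

lemma rep_singleton [simp]: "rep [x] = 0"
  by (simp add: rep_def)

lemma rep_Cons_Cons [simp]: "rep (x # y # r) = (if x = y then 1 else 0) + rep (y # r)"
  using card_Collect_less_Suc[of "length r" "\<lambda>i. (x # y # r) ! i = (x # y # r) ! Suc i"]
  by (simp add: rep_def)

lemma mem_H_iff:
  "q \<in> H n \<longleftrightarrow> q \<noteq> [] \<and> sorted_wrt (\<ge>) q \<and> (\<forall>x\<in>set q. 0 < x) \<and> hd q + length q - 1 = n"
  by (simp add: H_def is_partition_def perimeter_def)

lemma partition_of_mem_H: "q \<in> H n \<Longrightarrow> is_partition q"
  by (simp add: H_def)

lemma mem_H_neq_Nil: "q \<in> H n \<Longrightarrow> q \<noteq> []"
  by (simp add: mem_H_iff)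

lemma H_1: "H 1 = {[1]}"
proof -
  have "q \<in> H 1 \<longleftrightarrow> q = [1]" for q
    by (cases q) (auto simp: mem_H_iff simp flip: length_0_conv)
  then show ?thesis by blast
qed

lemma finite_H: "finite (H n)"
proof (rule finite_subset)
  show "H n \<subseteq> {xs. set xs \<subseteq> {..n} \<and> length xs \<le> n}"
    by (force simp: mem_H_iff neq_Nil_conv)
  show "finite {xs. set xs \<subseteq> {..n} \<and> length xs \<le> n}"
    by (rule finite_lists_length_le) simp
qed

definition dup_head :: "nat list \<Rightarrow> nat list" where
  "dup_head q = hd q # q"

definition inc_head :: "nat list \<Rightarrow> nat list" where
  "inc_head q = Suc (hd q) # tl q"

fun head_repeated :: "nat list \<Rightarrow> bool" where
  "head_repeated (x # y # r) \<longleftrightarrow> x = y"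
| "head_repeated _ \<longleftrightarrow> False"

lemma hd_dup_head [simp]: "hd (dup_head q) = hd q"
  by (simp add: dup_head_def)

lemma hd_inc_head [simp]: "hd (inc_head q) = Suc (hd q)"
  by (simp add: inc_head_def)

lemma head_repeated_dup_head: "q \<noteq> [] \<Longrightarrow> head_repeated (dup_head q)"
  by (cases q) (simp_all add: dup_head_def)

lemma not_head_repeated_inc_head: "is_partition q \<Longrightarrow> \<not> head_repeated (inc_head q)"
  by (cases q rule: head_repeated.cases) (auto simp: inc_head_def is_partition_def)

lemma rep_dup_head: "q \<noteq> [] \<Longrightarrow> rep (dup_head q) = Suc (rep q)"
  by (cases q) (simp_all add: dup_head_def)

lemma rep_inc_head:
  "is_partition q \<Longrightarrow> rep q = rep (inc_head q) + (if head_repeated q then 1 else 0)"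
  by (cases q rule: head_repeated.cases) (auto simp: inc_head_def is_partition_def)

lemma even_parts_dup_head:
  "q \<noteq> [] \<Longrightarrow> even_parts (dup_head q) = (if even (hd q) then 1 else 0) + even_parts q"
  by (cases q) (simp_all add: dup_head_def)

lemma even_parts_inc_head:
  "q \<noteq> [] \<Longrightarrow> even_parts (inc_head q) + (if even (hd q) then 1 else 0) =
     (if odd (hd q) then 1 else 0) + even_parts q"
  by (cases q) (simp_all add: inc_head_def)

lemma dup_head_mem_H: "q \<in> H n \<Longrightarrow> dup_head q \<in> H (Suc n)"
  by (cases q) (auto simp: mem_H_iff dup_head_def)

lemma inc_head_mem_H: "q \<in> H n \<Longrightarrow> inc_head q \<in> H (Suc n)"
  by (cases q) (auto simp: mem_H_iff inc_head_def)

lemma mem_H_Suc_cases: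
  assumes "q \<in> H (Suc n)" "0 < n"
  obtains p where "p \<in> H n" "q = dup_head p" | p where "p \<in> H n" "q = inc_head p"
proof -
  obtain x r where q: "q = x # r" "\<forall>y\<in>set r. y \<le> x"
    using assms(1) by (cases q) (auto simp: mem_H_iff)
  show ?thesis
  proof (cases "r \<noteq> [] \<and> x = hd r")
    case True
    then have "r \<in> H n" "q = dup_head r"
      using assms q by (auto simp: mem_H_iff dup_head_def)
    then show ?thesis using that by blast
  next
    case False
    with q assms have "\<forall>y\<in>set r. y < x" "2 \<le> x"
      by (cases r; fastforce simp: mem_H_iff)+
    then have "(x - 1) # r \<in> H n" "q = inc_head ((x - 1) # r)"
      using assms q by (auto simp: mem_H_iff inc_head_def)
    then show ?thesis using that by blast
  qed
qed

text \<open>Among partitions, only [1] reaches the last branch.\<close>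

function rep_to_even :: "nat list \<Rightarrow> nat list" where
  "rep_to_even [] = []"
| "rep_to_even (x # r) =
     (if r \<noteq> [] \<and> x = hd r
      then (if head_repeated r then dup_head else inc_head) (rep_to_even r)
      else if 2 \<le> x
      then (if head_repeated ((x - 1) # r) then inc_head else dup_head) (rep_to_even ((x - 1) # r))
      else x # r)"
  by pat_completeness auto
termination
  by (relation "measure (\<lambda>q. hd q + length q)") auto

declare rep_to_even.simps(2) [simp del]

lemma rep_to_even_dup_head:
  "q \<noteq> [] \<Longrightarrow>
   rep_to_even (dup_head q) = (if head_repeated q then dup_head else inc_head) (rep_to_even q)"
  by (simp add: dup_head_def rep_to_even.simps(2)[of "hd q"])

lemma rep_to_even_inc_head:
  assumes "is_partition q"
  shows "rep_to_even (inc_head q) = (if head_repeated q then inc_head else dup_head) (rep_to_even q)"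
proof -
  obtain x r where q: "q = x # r" "0 < x" "\<forall>y\<in>set r. y \<le> x"
    using assms by (cases q) (auto simp: is_partition_def)
  then show ?thesis
    by (cases r) (simp_all add: inc_head_def rep_to_even.simps(2)[of "Suc x"])
qed

lemma rep_to_even_mem_H: "0 < n \<Longrightarrow> q \<in> H n \<Longrightarrow> rep_to_even q \<in> H n"
proof (induction n arbitrary: q rule: nat_induct_non_zero)
  case 1
  then show ?case using H_1 by (simp add: rep_to_even.simps)
next
  case (Suc n)
  from Suc.prems Suc.hyps show ?case
  proof (cases rule: mem_H_Suc_cases)
    case (1 p)
    then show ?thesis using Suc.IH[OF 1(1)]
      by (simp add: rep_to_even_dup_head mem_H_neq_Nil dup_head_mem_H inc_head_mem_H)
  next
    case (2 p)
    then show ?thesis using Suc.IH[OF 2(1)]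
      by (simp add: rep_to_even_inc_head partition_of_mem_H dup_head_mem_H inc_head_mem_H)
  qed
qed

lemma even_hd_rep_to_even:
  "0 < n \<Longrightarrow> q \<in> H n \<Longrightarrow> even (hd (rep_to_even q)) \<longleftrightarrow> head_repeated q"
proof (induction n arbitrary: q rule: nat_induct_non_zero)
  case 1
  then show ?case using H_1 by (simp add: rep_to_even.simps)
next
  case (Suc n)
  from Suc.prems Suc.hyps show ?case
  proof (cases rule: mem_H_Suc_cases)
    case (1 p)
    then show ?thesis using Suc.IH[OF 1(1)]
      by (simp add: rep_to_even_dup_head mem_H_neq_Nil head_repeated_dup_head)
  next
    case (2 p)
    then show ?thesis using Suc.IH[OF 2(1)]
      by (simp add: rep_to_even_inc_head partition_of_mem_H not_head_repeated_inc_head)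
  qed
qed

lemma rep_eq_even_parts_rep_to_even:
  "0 < n \<Longrightarrow> q \<in> H n \<Longrightarrow> rep q = even_parts (rep_to_even q)"
proof (induction n arbitrary: q rule: nat_induct_non_zero)
  case 1
  then show ?case using H_1 by (simp add: rep_to_even.simps)
next
  case (Suc n)
  from Suc.prems Suc.hyps show ?case
  proof (cases rule: mem_H_Suc_cases)
    case (1 p)
    have "rep_to_even p \<noteq> []" "even (hd (rep_to_even p)) \<longleftrightarrow> head_repeated p"
      using 1(1) Suc.hyps mem_H_neq_Nil rep_to_even_mem_H even_hd_rep_to_even by blast+
    with 1 show ?thesis using Suc.IH[OF 1(1)] even_parts_inc_head[of "rep_to_even p"]
      by (cases "head_repeated p")
        (simp_all add: rep_to_even_dup_head mem_H_neq_Nil rep_dup_head even_parts_dup_head)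
  next
    case (2 p)
    have "rep_to_even p \<noteq> []" "even (hd (rep_to_even p)) \<longleftrightarrow> head_repeated p"
      using 2(1) Suc.hyps mem_H_neq_Nil rep_to_even_mem_H even_hd_rep_to_even by blast+
    with 2 show ?thesis using Suc.IH[OF 2(1)] rep_inc_head[of p] even_parts_inc_head[of "rep_to_even p"]
      by (cases "head_repeated p")
        (simp_all add: rep_to_even_inc_head partition_of_mem_H even_parts_dup_head)
  qed
qed

lemma H_subset_image_rep_to_even: "0 < n \<Longrightarrow> H n \<subseteq> rep_to_even ` H n"
proof (induction n rule: nat_induct_non_zero)
  case 1
  then show ?case using H_1 by (simp add: rep_to_even.simps)
next
  case (Suc n)
  have "{dup_head s, inc_head s} \<subseteq> rep_to_even ` H (Suc n)" if s: "s \<in> H n" for s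
  proof -
    obtain p where p: "p \<in> H n" "s = rep_to_even p"
      using Suc.IH s by blast
    then have "{dup_head s, inc_head s} = {rep_to_even (dup_head p), rep_to_even (inc_head p)}"
      by (auto simp: rep_to_even_dup_head rep_to_even_inc_head mem_H_neq_Nil partition_of_mem_H)
    with p(1) show ?thesis
      by (auto intro: dup_head_mem_H inc_head_mem_H)
  qed
  with Suc.hyps show ?case
    by (auto elim: mem_H_Suc_cases)
qed

theorem theorem2p7:
  fixes n :: nat
  assumes "0 < n"
  shows "\<exists>\<phi>. bij_betw \<phi> (H n) (H n) \<and> (\<forall>p\<in>H n. rep p = even_parts (\<phi> p))"
proof (intro exI conjI)
  have "rep_to_even ` H n = H n"
    using rep_to_even_mem_H H_subset_image_rep_to_even assms by blast
  then show "bij_betw rep_to_even (H n) (H n)"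
    by (simp add: bij_betw_def finite_surj_inj finite_H)
  show "\<forall>p\<in>H n. rep p = even_parts (rep_to_even p)"
    using rep_eq_even_parts_rep_to_even assms by blast
qed

end
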